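(* Let $(S,\circ)$ be a right loop with identity $1$, with group torsion $G_S$ and associated group $G_SS\le\mathrm{Sym}(S)$, and let $\sigma(S)$ be the stability relation on $S$. Then $N_{G_SS}(N_{G_SS}(G_S))=G_SS$ if and only if $\sigma(S)$ is a congruence on $S$ and, for all $y,z\in S$, $\{(x,\,x\,\theta^S f^S(y,z)) \mid x \in S\} \subseteq \sigma(S)$.
   Context: A right loop is a set $S$ with a binary operation $\circ$ having a two-sided identity $1$ such that for all $a,b\in S$ the equation $X\circ a=b$ has a unique solution $X\in S$. A right subloop of $S$ is a nonempty subset which is a right loop under the induced operation. A congruence on $S$ is an equivalence relation $R\subseteq S\times S$ which is a right subloop of $S\times S$ (with componentwise operation $(a,b)\circ(c,d)=(a\circ c,b\circ d)$). Products in $\mathrm{Sym}(S)$ follow the convention $(rs)(x)=s(r(x))$. For $u\in S$, $R_u\in\mathrm{Sym}(S)$ is $R_u(x)=x\circ u$, and $G_SS=\langle R_x : x\in S\rangle\le\mathrm{Sym}(S)$; $S$ is identified with $\{R_x: x\in S\}\subseteq G_SS$. For $y,z\in S$, $f^S(y,z)\in \mathrm{Sym}(S)$ is defined by: $f^S(y,z)(x)$ is the unique solution $X$ of $X\circ(y\circ z)=(x\circ y)\circ z$ (equivalently $f^S(y,z)=R_yR_zR_{y\circ z}^{-1}$). The group torsion $G_S$ is the subgroup of $\mathrm{Sym}(S)$ generated by all $f^S(y,z)$; it is a subgroup of $G_SS$. $G_S$ acts on $S$ via $x\,\theta^S h=h(x)$. $G_SS$ acts on $S$ by $x\star p=p(x)$,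 $\mathrm{stab}(G_SS,u)$ denotes the stabilizer of $u$, and the stability relation is $\sigma(S)=\{(x,y)\in S\times S \mid \mathrm{stab}(G_SS,x)=\mathrm{stab}(G_SS,y)\}$. *)

theory Defs
  imports "HOL-Combinatorics.Permutations"
begin

definition right_loop :: "'a set \<Rightarrow> ('a \<Rightarrow> 'a \<Rightarrow> 'a) \<Rightarrow> 'a \<Rightarrow> bool" where
  "right_loop S op e \<longleftrightarrow> e \<in> S \<and> (\<forall>a\<in>S. \<forall>b\<in>S. op a b \<in> S)
     \<and> (\<forall>a\<in>S. op e a = a \<and> op a e = a)
     \<and> (\<forall>a\<in>S. \<forall>b\<in>S. \<exists>!X. X \<in> S \<and> op X a = b)"

definition right_subloop :: "'a set \<Rightarrow> ('a \<Rightarrow> 'a \<Rightarrow> 'a) \<Rightarrow> 'a set \<Rightarrow> bool" where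
  "right_subloop S op T \<longleftrightarrow> T \<subseteq> S \<and> T \<noteq> {} \<and> (\<exists>e'. right_loop T op e')"

definition pair_op :: "('a \<Rightarrow> 'a \<Rightarrow> 'a) \<Rightarrow> 'a \<times> 'a \<Rightarrow> 'a \<times> 'a \<Rightarrow> 'a \<times> 'a" where
  "pair_op op p q = (op (fst p) (fst q), op (snd p) (snd q))"

definition congruence :: "'a set \<Rightarrow> ('a \<Rightarrow> 'a \<Rightarrow> 'a) \<Rightarrow> ('a \<times> 'a) set \<Rightarrow> bool" where
  "congruence S op R \<longleftrightarrow> equiv S R \<and> right_subloop (S \<times> S) (pair_op op) R"

text \<open>Elements of Sym(S) are represented as functions permuting S (identity outside S).
  The product r s of the paper (first r, then s) is s \<circ> r.\<close>
inductive_set perm_gen :: "('a \<Rightarrow> 'a) set \<Rightarrow> ('a \<Rightarrow> 'a) set" for A where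
  gen_id: "id \<in> perm_gen A"
| gen_base: "a \<in> A \<Longrightarrow> a \<in> perm_gen A"
| gen_comp: "p \<in> perm_gen A \<Longrightarrow> q \<in> perm_gen A \<Longrightarrow> q \<circ> p \<in> perm_gen A"
| gen_inv: "p \<in> perm_gen A \<Longrightarrow> inv p \<in> perm_gen A"

definition Rmul :: "'a set \<Rightarrow> ('a \<Rightarrow> 'a \<Rightarrow> 'a) \<Rightarrow> 'a \<Rightarrow> 'a \<Rightarrow> 'a" where
  "Rmul S op u = (\<lambda>x. if x \<in> S then op x u else x)"

definition GSS :: "'a set \<Rightarrow> ('a \<Rightarrow> 'a \<Rightarrow> 'a) \<Rightarrow> ('a \<Rightarrow> 'a) set" where
  "GSS S op = perm_gen (Rmul S op ` S)"

definition ftors :: "'a set \<Rightarrow> ('a \<Rightarrow> 'a \<Rightarrow> 'a) \<Rightarrow> 'a \<Rightarrow> 'a \<Rightarrow> 'a \<Rightarrow> 'a" where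
  "ftors S op y z = (\<lambda>x. if x \<in> S then (THE X. X \<in> S \<and> op X (op y z) = op (op x y) z) else x)"

definition GS :: "'a set \<Rightarrow> ('a \<Rightarrow> 'a \<Rightarrow> 'a) \<Rightarrow> ('a \<Rightarrow> 'a) set" where
  "GS S op = perm_gen {ftors S op y z | y z. y \<in> S \<and> z \<in> S}"

text \<open>Normalizer of H in G: g with g H g^-1 = H; in the paper's convention
  (g h g^-1)(x) = g^-1(h(g x)).\<close>
definition normalizer :: "('a \<Rightarrow> 'a) set \<Rightarrow> ('a \<Rightarrow> 'a) set \<Rightarrow> ('a \<Rightarrow> 'a) set" where
  "normalizer G H = {g \<in> G. (\<lambda>h. inv g \<circ> h \<circ> g) ` H = H}"

definition stab :: "('a \<Rightarrow> 'a) set \<Rightarrow> 'a \<Rightarrow> ('a \<Rightarrow> 'a) set" where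
  "stab G u = {p \<in> G. p u = u}"

definition stability_rel :: "'a set \<Rightarrow> ('a \<Rightarrow> 'a \<Rightarrow> 'a) \<Rightarrow> ('a \<times> 'a) set" where
  "stability_rel S op = {(x, y). x \<in> S \<and> y \<in> S \<and> stab (GSS S op) x = stab (GSS S op) y}"

end

theory Submission
  imports Defs
begin

text \<open>
  \<open>G\<^sub>SS\<close> acts transitively on \<open>S\<close> (\<open>R\<^sub>x\<close> sends \<open>e\<close> to \<open>x\<close>), and every element of \<open>G\<^sub>SS\<close>
  has the form \<open>R\<^sub>s \<circ> h\<close> with \<open>h \<in> G\<^sub>S\<close>; hence \<open>G\<^sub>S\<close> is exactly the stabiliser of \<open>e\<close>.
  The stability relation \<open>\<sigma>\<close> is invariant under \<open>G\<^sub>SS\<close>, so the normaliser \<open>N\<close> of this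
  stabiliser consists of the \<open>g\<close> with \<open>(e, g e) \<in> \<sigma>\<close>, and by transitivity \<open>N\<close> is normal
  in \<open>G\<^sub>SS\<close> iff every element of \<open>N\<close> moves each point within its \<open>\<sigma>\<close>-class.
  Invariance alone makes \<open>\<sigma>\<close> compatible with right multiplication and right cancellation;
  the condition on \<open>N\<close> adds left compatibility, because \<open>R\<^sub>y\<^sup>-\<^sup>1 \<circ> R\<^sub>y\<^sub>'\<close> lies in \<open>N\<close> when
  \<open>(y, y') \<in> \<sigma>\<close>, and this makes \<open>\<sigma>\<close> a congruence. It also covers the torsion maps
  \<open>f(y,z) \<in> G\<^sub>S \<subseteq> N\<close>. Conversely, if the generators \<open>f(y,z)\<close> move points within
  \<open>\<sigma>\<close>-classes, so does all of \<open>G\<^sub>S\<close>, and an element \<open>R\<^sub>s \<circ> h\<close> of \<open>N\<close> sends \<open>x\<close> to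
  \<open>op (h x) s\<close> with \<open>(e, s) \<in> \<sigma>\<close>, which a congruence relates to \<open>h x\<close>.
\<close>

locale perm_group_on =
  fixes G :: "('a \<Rightarrow> 'a) set" and S :: "'a set"
  assumes id_mem: "id \<in> G"
    and comp_mem: "p \<in> G \<Longrightarrow> q \<in> G \<Longrightarrow> q \<circ> p \<in> G"
    and inv_mem: "p \<in> G \<Longrightarrow> inv p \<in> G"
    and bij_mem: "p \<in> G \<Longrightarrow> bij p"
    and maps_into: "p \<in> G \<Longrightarrow> x \<in> S \<Longrightarrow> p x \<in> S"

lemma perm_group_on_perm_gen:
  assumes bij: "\<And>a. a \<in> A \<Longrightarrow> bij a" and outside: "\<And>a x. a \<in> A \<Longrightarrow> x \<notin> S \<Longrightarrow> a x = x"
  shows "perm_group_on (perm_gen A) S"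
proof -
  have perm: "bij p \<and> (\<forall>x. x \<notin> S \<longrightarrow> p x = x)" if "p \<in> perm_gen A" for p
    using that
  proof (induction p rule: perm_gen.induct)
    case gen_id
    then show ?case by (simp add: bij_id[unfolded id_def])
  next
    case (gen_base a)
    then show ?case using bij outside by blast
  next
    case (gen_comp p q)
    then show ?case using bij_comp by fastforce
  next
    case (gen_inv p)
    then show ?case by (metis bij_imp_bij_inv bij_inv_eq_iff)
  qed
  have "p x \<in> S" if "p \<in> perm_gen A" "x \<in> S" for p x
    using perm[OF that(1)] that(2) by (metis bij_is_inj injD)
  with perm show ?thesis
    by unfold_locales (auto intro: perm_gen.intros)
qed

lemma perm_gen_least:
  assumes "perm_group_on K S" and "A \<subseteq> K"
  shows "perm_gen A \<subseteq> K"
proof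
  fix p assume "p \<in> perm_gen A"
  then show "p \<in> K"
    by induction (use assms perm_group_on.id_mem perm_group_on.comp_mem perm_group_on.inv_mem in blast)+
qed

lemma perm_gen_subset_left_closed:
  assumes bij: "\<And>p. p \<in> perm_gen A \<Longrightarrow> bij p" and "id \<in> T"
    and closed: "\<And>a w. a \<in> A \<Longrightarrow> w \<in> T \<Longrightarrow> a \<circ> w \<in> T \<and> inv a \<circ> w \<in> T"
  shows "perm_gen A \<subseteq> T"
proof -
  have "\<forall>w\<in>T. p \<circ> w \<in> T \<and> inv p \<circ> w \<in> T" if "p \<in> perm_gen A" for p
    using that
  proof (induction p rule: perm_gen.induct)
    case (gen_comp p q)
    have "inv (q \<circ> p) = inv p \<circ> inv q"
      using bij gen_comp.hyps by (simp add: o_inv_distrib)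
    with gen_comp.IH show ?case by (metis comp_assoc)
  next
    case (gen_inv p)
    then show ?case using bij by (simp add: inv_inv_eq)
  next
    case (gen_base a)
    then show ?case using closed by blast
  qed simp
  then show ?thesis using \<open>id \<in> T\<close> by fastforce
qed

definition same_stab :: "('a \<Rightarrow> 'a) set \<Rightarrow> 'a set \<Rightarrow> ('a \<times> 'a) set" where
  "same_stab G S = {(x, y). x \<in> S \<and> y \<in> S \<and> stab G x = stab G y}"

lemma same_stab_iff:
  "(x, y) \<in> same_stab G S \<longleftrightarrow> x \<in> S \<and> y \<in> S \<and> (\<forall>p\<in>G. p x = x \<longleftrightarrow> p y = y)"
  unfolding same_stab_def stab_def by auto

lemma same_stab_trans:
  "(x, y) \<in> same_stab G S \<Longrightarrow> (y, z) \<in> same_stab G S \<Longrightarrow> (x, z) \<in> same_stab G S"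
  by (simp add: same_stab_def)

lemma equiv_same_stab: "equiv S (same_stab G S)"
  by (rule equivI) (auto simp: same_stab_def refl_on_def sym_def trans_def)

context perm_group_on
begin

abbreviation "\<sigma> \<equiv> same_stab G S"

lemma inv_apply [simp]: "g \<in> G \<Longrightarrow> inv g (g x) = x"
  using bij_mem by (simp add: bij_is_inj)

lemma apply_inv [simp]: "g \<in> G \<Longrightarrow> g (inv g x) = x"
  using bij_mem by (simp add: bij_is_surj surj_f_inv_f)

lemma same_stab_image:
  assumes g: "g \<in> G" and xy: "(x, y) \<in> \<sigma>"
  shows "(g x, g y) \<in> \<sigma>"
proof -
  have "p (g x) = g x \<longleftrightarrow> p (g y) = g y" if p: "p \<in> G" for p
  proof -
    have "inv g \<circ> p \<circ> g \<in> G" using g p by (intro comp_mem inv_mem)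
    then have "(inv g \<circ> p \<circ> g) x = x \<longleftrightarrow> (inv g \<circ> p \<circ> g) y = y"
      using xy unfolding same_stab_iff by blast
    then show ?thesis using g by (metis bij_inv_eq_iff bij_mem comp_apply)
  qed
  then show ?thesis using xy g maps_into by (simp add: same_stab_iff)
qed

lemma same_stab_image_iff: "g \<in> G \<Longrightarrow> (g x, g y) \<in> \<sigma> \<longleftrightarrow> (x, y) \<in> \<sigma>"
  using same_stab_image[of "inv g" "g x" "g y"] same_stab_image[of g x y] inv_mem by auto

lemma conj_stab:
  assumes g: "g \<in> G"
  shows "(\<lambda>h. inv g \<circ> h \<circ> g) ` stab G y = stab G (inv g y)"
proof
  show "(\<lambda>h. inv g \<circ> h \<circ> g) ` stab G y \<subseteq> stab G (inv g y)"
    using g by (auto simp: stab_def intro: comp_mem inv_mem)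
  show "stab G (inv g y) \<subseteq> (\<lambda>h. inv g \<circ> h \<circ> g) ` stab G y"
  proof
    fix q assume q: "q \<in> stab G (inv g y)"
    have "g \<circ> q \<circ> inv g \<in> stab G y"
      using g q by (auto simp: stab_def intro: comp_mem inv_mem)
    moreover have "q = inv g \<circ> (g \<circ> q \<circ> inv g) \<circ> g"
      using g by (auto simp: fun_eq_iff)
    ultimately show "q \<in> (\<lambda>h. inv g \<circ> h \<circ> g) ` stab G y" by blast
  qed
qed

lemma normalizer_stab:
  assumes e: "e \<in> S"
  shows "normalizer G (stab G e) = {g \<in> G. (e, g e) \<in> \<sigma>}"
proof -
  have stab_eq_iff: "stab G (inv g e) = stab G e \<longleftrightarrow> (e, g e) \<in> \<sigma>" if g: "g \<in> G" for g
  proof -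
    have "stab G (inv g e) = stab G e \<longleftrightarrow> (inv g e, e) \<in> \<sigma>"
      using e g inv_mem maps_into by (auto simp: same_stab_def)
    also have "\<dots> \<longleftrightarrow> (e, g e) \<in> \<sigma>"
      using same_stab_image_iff[OF g, of "inv g e" e] g by (auto simp: same_stab_def)
    finally show ?thesis .
  qed
  show ?thesis
    unfolding normalizer_def by (rule Collect_cong) (metis conj_stab stab_eq_iff)
qed

lemma perm_group_on_stab: "perm_group_on (stab G u) S"
proof unfold_locales
  fix p q assume p: "p \<in> stab G u"
  then show "inv p \<in> stab G u"
    using inv_mem by (simp add: stab_def) (metis inv_apply)
  assume "q \<in> stab G u"
  with p show "q \<circ> p \<in> stab G u"
    using comp_mem by (simp add: stab_def)
qed (use id_mem bij_mem maps_into in \<open>auto simp: stab_def\<close>)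

lemma perm_group_on_moves_within:
  assumes E: "equiv S E"
  shows "perm_group_on {p \<in> G. \<forall>x\<in>S. (x, p x) \<in> E} S"
proof unfold_locales
  have refl: "x \<in> S \<Longrightarrow> (x, x) \<in> E" for x
    using E by (auto elim: equivE simp: refl_on_def)
  have sym: "(x, y) \<in> E \<Longrightarrow> (y, x) \<in> E" for x y
    using E by (auto elim: equivE dest: symD)
  have trans: "(x, y) \<in> E \<Longrightarrow> (y, z) \<in> E \<Longrightarrow> (x, z) \<in> E" for x y z
    using E by (auto elim: equivE dest: transD)
  show "id \<in> {p \<in> G. \<forall>x\<in>S. (x, p x) \<in> E}"
    using id_mem refl by simp
  fix p q assume p: "p \<in> {p \<in> G. \<forall>x\<in>S. (x, p x) \<in> E}"
  show "inv p \<in> {p \<in> G. \<forall>x\<in>S. (x, p x) \<in> E}"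
  proof (intro CollectI conjI ballI)
    show "inv p \<in> G" using p inv_mem by blast
    fix x assume "x \<in> S"
    then have "(inv p x, p (inv p x)) \<in> E" using p maps_into[OF inv_mem] by blast
    then show "(x, inv p x) \<in> E" using p sym by simp
  qed
  assume q: "q \<in> {p \<in> G. \<forall>x\<in>S. (x, p x) \<in> E}"
  show "q \<circ> p \<in> {p \<in> G. \<forall>x\<in>S. (x, p x) \<in> E}"
  proof (intro CollectI conjI ballI)
    show "q \<circ> p \<in> G" using p q comp_mem by blast
    fix x assume x: "x \<in> S"
    then have "p x \<in> S" using p maps_into by blast
    then have "(x, p x) \<in> E" "(p x, q (p x)) \<in> E" using p q x by blast+
    then show "(x, (q \<circ> p) x) \<in> E" using trans by simp
  qed
next
  fix p assume "p \<in> {p \<in> G. \<forall>x\<in>S. (x, p x) \<in> E}"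
  then show "bij p" using bij_mem by blast
next
  fix p x assume "p \<in> {p \<in> G. \<forall>x\<in>S. (x, p x) \<in> E}" "x \<in> S"
  then show "p x \<in> S" using maps_into by blast
qed

lemma conj_moves_iff:
  "g \<in> G \<Longrightarrow> (e, (inv g \<circ> n \<circ> g) e) \<in> \<sigma> \<longleftrightarrow> (g e, n (g e)) \<in> \<sigma>"
  using same_stab_image_iff[of g e "inv g (n (g e))"] by simp

lemma normalizer_normalizer_stab_eq_iff:
  assumes e: "e \<in> S" and transitive: "\<And>x. x \<in> S \<Longrightarrow> \<exists>g\<in>G. g e = x"
  shows "normalizer G (normalizer G (stab G e)) = G
    \<longleftrightarrow> (\<forall>n\<in>normalizer G (stab G e). \<forall>x\<in>S. (x, n x) \<in> \<sigma>)"
  unfolding normalizer_stab[OF e]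
proof
  assume normal: "normalizer G {g \<in> G. (e, g e) \<in> \<sigma>} = G"
  show "\<forall>n\<in>{g \<in> G. (e, g e) \<in> \<sigma>}. \<forall>x\<in>S. (x, n x) \<in> \<sigma>"
  proof (intro ballI)
    fix n x assume n: "n \<in> {g \<in> G. (e, g e) \<in> \<sigma>}" and "x \<in> S"
    then obtain g where g: "g \<in> G" "g e = x" using transitive by blast
    then have "inv g \<circ> n \<circ> g \<in> {g \<in> G. (e, g e) \<in> \<sigma>}"
      using normal n unfolding normalizer_def by blast
    then show "(x, n x) \<in> \<sigma>" using conj_moves_iff g by blast
  qed
next
  assume moves: "\<forall>n\<in>{g \<in> G. (e, g e) \<in> \<sigma>}. \<forall>x\<in>S. (x, n x) \<in> \<sigma>"
  have conj_mem: "inv g \<circ> n \<circ> g \<in> {g \<in> G. (e, g e) \<in> \<sigma>}"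
    if "g \<in> G" "n \<in> {g \<in> G. (e, g e) \<in> \<sigma>}" for g n
  proof -
    have "(g e, n (g e)) \<in> \<sigma>" using that moves e maps_into by blast
    then show ?thesis
      using that conj_moves_iff comp_mem inv_mem by (metis (no_types, lifting) mem_Collect_eq)
  qed
  have "(\<lambda>h. inv g \<circ> h \<circ> g) ` {g \<in> G. (e, g e) \<in> \<sigma>} = {g \<in> G. (e, g e) \<in> \<sigma>}"
    if g: "g \<in> G" for g
  proof
    show "(\<lambda>h. inv g \<circ> h \<circ> g) ` {g \<in> G. (e, g e) \<in> \<sigma>} \<subseteq> {g \<in> G. (e, g e) \<in> \<sigma>}"
      using conj_mem g by blast
    show "{g \<in> G. (e, g e) \<in> \<sigma>} \<subseteq> (\<lambda>h. inv g \<circ> h \<circ> g) ` {g \<in> G. (e, g e) \<in> \<sigma>}"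
    proof
      fix n assume n: "n \<in> {g \<in> G. (e, g e) \<in> \<sigma>}"
      have "g \<circ> n \<circ> inv g \<in> {g \<in> G. (e, g e) \<in> \<sigma>}"
        using conj_mem[OF inv_mem[OF g] n] bij_mem[OF g] by (simp add: inv_inv_eq)
      moreover have "n = inv g \<circ> (g \<circ> n \<circ> inv g) \<circ> g"
        using g by (simp add: fun_eq_iff)
      ultimately show "n \<in> (\<lambda>h. inv g \<circ> h \<circ> g) ` {g \<in> G. (e, g e) \<in> \<sigma>}" by blast
    qed
  qed
  then show "normalizer G {g \<in> G. (e, g e) \<in> \<sigma>} = G"
    unfolding normalizer_def by blast
qed

end

locale rloop =
  fixes S :: "'a set" and op :: "'a \<Rightarrow> 'a \<Rightarrow> 'a" and e :: 'a
  assumes right_loop: "right_loop S op e"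
begin

lemma e_mem: "e \<in> S"
  and op_closed: "a \<in> S \<Longrightarrow> b \<in> S \<Longrightarrow> op a b \<in> S"
  and op_e_left [simp]: "a \<in> S \<Longrightarrow> op e a = a"
  and op_e_right [simp]: "a \<in> S \<Longrightarrow> op a e = a"
  and right_div_ex1: "a \<in> S \<Longrightarrow> b \<in> S \<Longrightarrow> \<exists>!X. X \<in> S \<and> op X a = b"
  using right_loop unfolding right_loop_def by blast+

lemma right_cancel: "a \<in> S \<Longrightarrow> x \<in> S \<Longrightarrow> y \<in> S \<Longrightarrow> op x a = op y a \<Longrightarrow> x = y"
  using right_div_ex1[of a "op y a"] op_closed by blast

lemma congruenceI:
  assumes E: "equiv S E"
    and right_compat: "\<And>x x' y. (x, x') \<in> E \<Longrightarrow> y \<in> S \<Longrightarrow> (op x y, op x' y) \<in> E"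
    and left_compat: "\<And>x y y'. x \<in> S \<Longrightarrow> (y, y') \<in> E \<Longrightarrow> (op x y, op x y') \<in> E"
    and cancel: "\<And>x x' y. x \<in> S \<Longrightarrow> x' \<in> S \<Longrightarrow> y \<in> S \<Longrightarrow> (op x y, op x' y) \<in> E \<Longrightarrow> (x, x') \<in> E"
  shows "congruence S op E"
proof -
  have E_S: "E \<subseteq> S \<times> S" using E by (rule equiv_type)
  have sym: "(x, y) \<in> E \<Longrightarrow> (y, x) \<in> E" for x y
    using E by (auto elim: equivE dest: symD)
  have trans: "(x, y) \<in> E \<Longrightarrow> (y, z) \<in> E \<Longrightarrow> (x, z) \<in> E" for x y z
    using E by (auto elim: equivE dest: transD)
  have ee: "(e, e) \<in> E" using E e_mem by (auto elim: equivE simp: refl_on_def)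
  have closed: "pair_op op a b \<in> E" if "a \<in> E" "b \<in> E" for a b
  proof -
    obtain x x' y y' where ab: "a = (x, x')" "b = (y, y')" by fastforce
    with that E_S have "(op x y, op x' y) \<in> E" "(op x' y, op x' y') \<in> E"
      by (auto intro: right_compat left_compat)
    then show ?thesis using trans ab by (simp add: pair_op_def)
  qed
  have div: "\<exists>!X. X \<in> E \<and> pair_op op X a = b" if "a \<in> E" "b \<in> E" for a b
  proof -
    obtain c d c' d' where ab: "a = (c, d)" "b = (c', d')" by fastforce
    with that E_S have S: "c \<in> S" "d \<in> S" "c' \<in> S" "d' \<in> S" by auto
    obtain u v where u: "u \<in> S" "op u c = c'" and v: "v \<in> S" "op v d = d'"
      using right_div_ex1 S by metis
    have "(op v c, op v d) \<in> E" using left_compat[OF v(1)] that(1) ab by simp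
    then have "(op v c, d') \<in> E" using v(2) by simp
    then have "(op u c, op v c) \<in> E" using that(2) ab u(2) sym trans by blast
    then have "(u, v) \<in> E" using cancel u v S by blast
    moreover have "X = (u, v)" if "X \<in> E" "pair_op op X a = b" for X
      using that E_S ab u v S right_cancel by (cases X) (auto simp: pair_op_def)
    ultimately show ?thesis using u v ab by (auto simp: pair_op_def)
  qed
  have "right_loop E (pair_op op) (e, e)"
    unfolding right_loop_def using ee closed div E_S by (auto simp: pair_op_def)
  then show ?thesis
    unfolding congruence_def right_subloop_def using E E_S ee by blast
qed

lemma congruence_pair_op_closed:
  assumes "congruence S op E" "a \<in> E" "b \<in> E"
  shows "pair_op op a b \<in> E"
  using assms unfolding congruence_def right_subloop_def right_loop_def by blast

abbreviation "R \<equiv> Rmul S op"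

lemma R_apply [simp]: "x \<in> S \<Longrightarrow> R u x = op x u"
  by (simp add: Rmul_def)

lemma R_outside: "x \<notin> S \<Longrightarrow> R u x = x"
  by (simp add: Rmul_def)

lemma R_e: "R e = id"
  by (simp add: Rmul_def fun_eq_iff)

lemma bij_R:
  assumes u: "u \<in> S"
  shows "bij (R u)"
proof (rule bij_betw_byWitness)
  let ?div = "\<lambda>y. if y \<in> S then THE X. X \<in> S \<and> op X u = y else y"
  have div: "?div y \<in> S \<and> op (?div y) u = y" if "y \<in> S" for y
    using theI'[OF right_div_ex1[OF u that]] that by simp
  show "\<forall>x\<in>UNIV. ?div (R u x) = x"
  proof
    fix x show "?div (R u x) = x"
    proof (cases "x \<in> S")
      case True
      then have "op x u \<in> S" using u op_closed by blast
      with div[OF this] True u show ?thesis using right_cancel by auto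
    qed (simp add: R_outside)
  qed
  show "\<forall>y\<in>UNIV. R u (?div y) = y"
    using div by (simp add: R_outside)
qed auto

sublocale perm_group_on "GSS S op" S
  unfolding GSS_def by (rule perm_group_on_perm_gen) (auto simp: bij_R R_outside)

lemma R_mem: "u \<in> S \<Longrightarrow> R u \<in> GSS S op"
  unfolding GSS_def by (rule gen_base) simp

lemma ftors_spec:
  assumes y: "y \<in> S" and z: "z \<in> S" and x: "x \<in> S"
  shows "ftors S op y z x \<in> S \<and> op (ftors S op y z x) (op y z) = op (op x y) z"
  using theI'[OF right_div_ex1[OF op_closed[OF y z] op_closed[OF op_closed[OF x y] z]]] x
  by (simp add: ftors_def)

lemma R_comp_ftors:
  assumes "y \<in> S" "z \<in> S"
  shows "R (op y z) \<circ> ftors S op y z = R z \<circ> R y"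
proof
  fix x show "(R (op y z) \<circ> ftors S op y z) x = (R z \<circ> R y) x"
  proof (cases "x \<in> S")
    case True
    then show ?thesis using ftors_spec[OF assms True] assms op_closed by simp
  qed (simp add: R_outside ftors_def)
qed

lemma ftors_mem:
  assumes y: "y \<in> S" and z: "z \<in> S"
  shows "ftors S op y z \<in> GSS S op"
proof -
  have "inv (R (op y z)) \<circ> R (op y z) = id"
    using bij_R[OF op_closed[OF y z]] bij_is_inj inv_o_cancel by blast
  then have "ftors S op y z = inv (R (op y z)) \<circ> (R z \<circ> R y)"
    using R_comp_ftors[OF y z] by (metis comp_assoc id_comp)
  then show ?thesis using y z op_closed by (simp add: comp_mem inv_mem R_mem)
qed

lemma ftors_fixes_e:
  assumes "y \<in> S" "z \<in> S"
  shows "ftors S op y z e = e"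
  using ftors_spec[OF assms e_mem] assms e_mem op_closed
    right_cancel[of "op y z" "ftors S op y z e" e] by simp

lemma GS_subset_stab: "GS S op \<subseteq> stab (GSS S op) e"
  unfolding GS_def
  by (rule perm_gen_least[OF perm_group_on_stab]) (auto simp: stab_def ftors_mem ftors_fixes_e)

text \<open>\<open>R\<^sub>x \<circ> R\<^sub>s = R\<^bsub>op s x\<^esub> \<circ> f(s,x)\<close> and \<open>R\<^sub>x\<^sup>-\<^sup>1 \<circ> R\<^bsub>op t x\<^esub> = R\<^sub>t \<circ> f(t,x)\<^sup>-\<^sup>1\<close>,
  so the set of these products
  is closed under left multiplication by the generators of \<open>G\<^sub>SS\<close> and their inverses.\<close>

lemma GSS_subset_R_comp_GS: "GSS S op \<subseteq> {R s \<circ> h | s h. s \<in> S \<and> h \<in> GS S op}"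
  unfolding GSS_def
proof (rule perm_gen_subset_left_closed)
  show "\<And>p. p \<in> perm_gen (R ` S) \<Longrightarrow> bij p"
    using bij_mem unfolding GSS_def .
  show "id \<in> {R s \<circ> h | s h. s \<in> S \<and> h \<in> GS S op}"
    using e_mem R_e unfolding GS_def by (metis (mono_tags, lifting) gen_id id_comp mem_Collect_eq)
next
  fix a w assume "a \<in> R ` S" and "w \<in> {R s \<circ> h | s h. s \<in> S \<and> h \<in> GS S op}"
  then obtain x s h where x: "x \<in> S" "a = R x" and s: "s \<in> S" and h: "h \<in> GS S op"
    and w: "w = R s \<circ> h" by blast
  have "a \<circ> w = R (op s x) \<circ> (ftors S op s x \<circ> h)"
    by (simp only: w x(2) comp_assoc[symmetric] R_comp_ftors[OF s x(1)])
  moreover have "ftors S op s x \<circ> h \<in> GS S op"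
    using s x h unfolding GS_def by (blast intro: gen_comp gen_base)
  moreover obtain t where t: "t \<in> S" "op t x = s"
    using right_div_ex1[OF x(1) s] by blast
  let ?f = "ftors S op t x"
  have "inv a \<circ> w = R t \<circ> (inv ?f \<circ> h)"
  proof -
    have "?f \<circ> inv ?f = id"
      using bij_mem[OF ftors_mem[OF t(1) x(1)]] bij_is_surj surj_iff by blast
    then have "R s = R x \<circ> R t \<circ> inv ?f"
      using R_comp_ftors[OF t(1) x(1)] t(2) by (metis comp_assoc comp_id)
    moreover have "inv (R x) \<circ> R x = id"
      using bij_R[OF x(1)] bij_is_inj inv_o_cancel by blast
    ultimately show ?thesis using w x(2) by (metis comp_assoc id_comp)
  qed
  moreover have "inv ?f \<circ> h \<in> GS S op"
    using t x h unfolding GS_def by (blast intro: gen_comp gen_inv gen_base)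
  ultimately show "a \<circ> w \<in> {R s \<circ> h | s h. s \<in> S \<and> h \<in> GS S op}
    \<and> inv a \<circ> w \<in> {R s \<circ> h | s h. s \<in> S \<and> h \<in> GS S op}"
    using s t x op_closed by blast
qed

lemma GS_eq_stab: "GS S op = stab (GSS S op) e"
proof
  show "stab (GSS S op) e \<subseteq> GS S op"
  proof
    fix g assume g: "g \<in> stab (GSS S op) e"
    then obtain s h where s: "s \<in> S" and h: "h \<in> GS S op" and gsh: "g = R s \<circ> h"
      using GSS_subset_R_comp_GS by (auto simp: stab_def)
    have "h e = e" using h GS_subset_stab by (auto simp: stab_def)
    then have "s = e" using g gsh e_mem s by (simp add: stab_def)
    then show "g \<in> GS S op" using gsh h R_e by simp
  qed
qed (rule GS_subset_stab)

lemma normalizer_GS: "normalizer (GSS S op) (GS S op) = {g \<in> GSS S op. (e, g e) \<in> \<sigma>}"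
  using normalizer_stab[OF e_mem] GS_eq_stab by simp

lemma same_stab_op_right: "(x, x') \<in> \<sigma> \<Longrightarrow> y \<in> S \<Longrightarrow> (op x y, op x' y) \<in> \<sigma>"
  using same_stab_image[OF R_mem] by (fastforce simp: same_stab_def)

lemma same_stab_op_right_cancel:
  "x \<in> S \<Longrightarrow> x' \<in> S \<Longrightarrow> y \<in> S \<Longrightarrow> (op x y, op x' y) \<in> \<sigma> \<Longrightarrow> (x, x') \<in> \<sigma>"
  using same_stab_image_iff[OF R_mem, of y x x'] by simp

lemma same_stab_op_left:
  assumes moves: "\<forall>n\<in>normalizer (GSS S op) (GS S op). \<forall>x\<in>S. (x, n x) \<in> \<sigma>"
    and x: "x \<in> S" and yy': "(y, y') \<in> \<sigma>"
  shows "(op x y, op x y') \<in> \<sigma>"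
proof -
  have y: "y \<in> S" "y' \<in> S" using yy' by (auto simp: same_stab_def)
  let ?g = "inv (R y) \<circ> R y'"
  have g: "?g \<in> GSS S op" using y by (simp add: comp_mem inv_mem R_mem)
  have "inv (R y) y = e"
    using inv_apply[OF R_mem[OF y(1)], of e] e_mem y by simp
  then have "(e, ?g e) \<in> \<sigma>"
    using same_stab_image[OF inv_mem[OF R_mem[OF y(1)]] yy'] y e_mem by simp
  then have "(x, ?g x) \<in> \<sigma>" using moves g x normalizer_GS by blast
  from same_stab_image[OF R_mem[OF y(1)] this] show ?thesis
    using x y R_mem[OF y(1)] by simp
qed

lemma congruence_if_moves:
  assumes "\<forall>n\<in>normalizer (GSS S op) (GS S op). \<forall>x\<in>S. (x, n x) \<in> \<sigma>"
  shows "congruence S op \<sigma>"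
  using equiv_same_stab same_stab_op_right same_stab_op_left[OF assms] same_stab_op_right_cancel
  by (rule congruenceI)

lemma ftors_moves_if_moves:
  assumes "\<forall>n\<in>normalizer (GSS S op) (GS S op). \<forall>x\<in>S. (x, n x) \<in> \<sigma>"
    and "y \<in> S" "z \<in> S" "x \<in> S"
  shows "(x, ftors S op y z x) \<in> \<sigma>"
proof -
  have "ftors S op y z \<in> GS S op"
    unfolding GS_def using assms(2,3) by (blast intro: gen_base)
  then have "ftors S op y z \<in> normalizer (GSS S op) (GS S op)"
    using GS_eq_stab normalizer_GS e_mem by (auto simp: stab_def same_stab_def)
  then show ?thesis using assms(1,4) by blast
qed

lemma moves_if_congruence_ftors:
  assumes cong: "congruence S op \<sigma>"
    and ftors: "\<And>y z x. y \<in> S \<Longrightarrow> z \<in> S \<Longrightarrow> x \<in> S \<Longrightarrow> (x, ftors S op y z x) \<in> \<sigma>"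
    and n: "n \<in> normalizer (GSS S op) (GS S op)" and x: "x \<in> S"
  shows "(x, n x) \<in> \<sigma>"
proof -
  have GS_moves: "GS S op \<subseteq> {p \<in> GSS S op. \<forall>x\<in>S. (x, p x) \<in> \<sigma>}"
    unfolding GS_def
    by (rule perm_gen_least[OF perm_group_on_moves_within[OF equiv_same_stab]])
      (auto simp: ftors_mem ftors)
  obtain s h where s: "s \<in> S" and h: "h \<in> GS S op" and nsh: "n = R s \<circ> h"
    using n GSS_subset_R_comp_GS normalizer_GS by blast
  have "h e = e" using h GS_eq_stab by (simp add: stab_def)
  then have "(e, s) \<in> \<sigma>" using n nsh normalizer_GS e_mem s by simp
  moreover have hx: "(x, h x) \<in> \<sigma>" using GS_moves h x by blast
  moreover have "h x \<in> S" using hx by (simp add: same_stab_def)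
  ultimately have "(h x, op (h x) s) \<in> \<sigma>"
    using congruence_pair_op_closed[OF cong, of "(h x, h x)" "(e, s)"] e_mem
    by (simp add: pair_op_def same_stab_def)
  with hx show ?thesis using nsh \<open>h x \<in> S\<close> by (simp add: same_stab_trans)
qed

end

theorem mainTheorem2:
  fixes S :: "'a set" and op :: "'a \<Rightarrow> 'a \<Rightarrow> 'a" and e :: 'a
  assumes "right_loop S op e"
  shows "normalizer (GSS S op) (normalizer (GSS S op) (GS S op)) = GSS S op
    \<longleftrightarrow> congruence S op (stability_rel S op)
        \<and> (\<forall>y\<in>S. \<forall>z\<in>S. {(x, ftors S op y z x) | x. x \<in> S} \<subseteq> stability_rel S op)"
proof -
  interpret rloop S op e by (rule rloop.intro) (fact assms)
  have \<sigma>: "stability_rel S op = \<sigma>"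
    by (simp add: stability_rel_def same_stab_def)
  have "normalizer (GSS S op) (normalizer (GSS S op) (GS S op)) = GSS S op
      \<longleftrightarrow> (\<forall>n\<in>normalizer (GSS S op) (GS S op). \<forall>x\<in>S. (x, n x) \<in> \<sigma>)"
    unfolding GS_eq_stab
    by (rule normalizer_normalizer_stab_eq_iff[OF e_mem]) (metis R_apply R_mem op_e_left e_mem)
  also have "\<dots> \<longleftrightarrow> congruence S op \<sigma> \<and> (\<forall>y\<in>S. \<forall>z\<in>S. \<forall>x\<in>S. (x, ftors S op y z x) \<in> \<sigma>)"
    using congruence_if_moves ftors_moves_if_moves moves_if_congruence_ftors by blast
  finally show ?thesis unfolding \<sigma> by blast
qed

end
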